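(* Let $\delta\ge 2$, $n\ge 7\delta-7$ and $s$ be integers with $\delta+1\le s\le n/2$. Then $$\rho_Q\big(K_s\vee(K_{n-2s+1}\cup(s-1)K_1)\big)\ <\ \rho_Q\big(K_\delta\vee(K_{n-2\delta+1}\cup(\delta-1)K_1)\big).$$
   Context: $Q(G)=A(G)+D(G)$ is the signless Laplacian matrix (adjacency matrix plus diagonal degree matrix) and $\rho_Q(G)$ its largest eigenvalue. $K_m$ is the complete graph on $m$ vertices, $tK_1$ the edgeless graph on $t$ vertices, $\cup$ disjoint union, and $G_1\vee G_2$ the join (disjoint union plus all edges between $V(G_1)$ and $V(G_2)$). *)

theory Defs
  imports "Jordan_Normal_Form.Char_Poly"
begin

text \<open>A finite simple graph on the vertex set {0..<n}: a pair (n, adj) with adj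
  a symmetric irreflexive relation (the constructions below preserve this).\<close>

type_synonym sgraph = "nat \<times> (nat \<Rightarrow> nat \<Rightarrow> bool)"

definition nverts :: "sgraph \<Rightarrow> nat" where "nverts G = fst G"
definition adj :: "sgraph \<Rightarrow> nat \<Rightarrow> nat \<Rightarrow> bool" where "adj G = snd G"

definition complete_graph :: "nat \<Rightarrow> sgraph" where
  "complete_graph m = (m, \<lambda>i j. i < m \<and> j < m \<and> i \<noteq> j)"

definition empty_graph :: "nat \<Rightarrow> sgraph" where
  "empty_graph t = (t, \<lambda>i j. False)"

definition disj_union :: "sgraph \<Rightarrow> sgraph \<Rightarrow> sgraph" where
  "disj_union G1 G2 = (nverts G1 + nverts G2,
     \<lambda>i j. (i < nverts G1 \<and> j < nverts G1 \<and> adj G1 i j) \<or>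
           (nverts G1 \<le> i \<and> nverts G1 \<le> j \<and> i < nverts G1 + nverts G2 \<and>
            j < nverts G1 + nverts G2 \<and> adj G2 (i - nverts G1) (j - nverts G1)))"

definition join_graph :: "sgraph \<Rightarrow> sgraph \<Rightarrow> sgraph" where
  "join_graph G1 G2 = (nverts G1 + nverts G2,
     \<lambda>i j. adj (disj_union G1 G2) i j \<or>
           (i < nverts G1 \<and> nverts G1 \<le> j \<and> j < nverts G1 + nverts G2) \<or>
           (j < nverts G1 \<and> nverts G1 \<le> i \<and> i < nverts G1 + nverts G2))"

definition degree :: "sgraph \<Rightarrow> nat \<Rightarrow> nat" where
  "degree G i = card {j. j < nverts G \<and> adj G i j}"

definition adjacency_mat :: "sgraph \<Rightarrow> real mat" where
  "adjacency_mat G = mat (nverts G) (nverts G) (\<lambda>(i, j). if adj G i j then 1 else 0)"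

definition degree_mat :: "sgraph \<Rightarrow> real mat" where
  "degree_mat G = mat (nverts G) (nverts G) (\<lambda>(i, j). if i = j then real (degree G i) else 0)"

definition signless_laplacian :: "sgraph \<Rightarrow> real mat" where
  "signless_laplacian G = adjacency_mat G + degree_mat G"

text \<open>Largest eigenvalue of Q(G) (Q(G) is real symmetric, so all eigenvalues are real).\<close>
definition rhoQ :: "sgraph \<Rightarrow> real" where
  "rhoQ G = Max {k. eigenvalue (signless_laplacian G) k}"

end

theory Submission
  imports Defs
begin

(* Write G_s = K_s \/ (K_{n-2s+1} u (s-1)K_1). The split of its vertices into the two cliques
   and the s-1 isolated vertices is an equitable partition, so every root r > 2n-2s of the
   characteristic polynomial f_s of the 3x3 quotient matrix yields an eigenvector of Q(G_s)
   that is positive and constant on the three parts. For a nonnegative matrix an eigenvalue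
   with a positive eigenvector dominates every eigenvalue in absolute value, hence
   rho_Q(G_s) is that root, and the intermediate value theorem provides one in (2n-2s, 3n-2s].
   Finally f_s - f_delta = (s - delta) h, where h is positive to the right of 2n-2delta as soon
   as n >= 7delta-7. Thus f_s(rho_Q(G_delta)) > 0 > f_s(2n-2s), and f_s has its root
   rho_Q(G_s) strictly below rho_Q(G_delta). *)

lemma abs_eigenvalue_le_of_positive_eigenvector:
  fixes A :: "real mat"
  assumes A: "A \<in> carrier_mat N N"
    and nonneg: "\<And>i j. i < N \<Longrightarrow> j < N \<Longrightarrow> A $$ (i, j) \<ge> 0"
    and w: "w \<in> carrier_vec N" and w_pos: "\<And>i. i < N \<Longrightarrow> w $ i > 0"
    and w_eigen: "A *\<^sub>v w = r \<cdot>\<^sub>v w"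
    and k: "eigenvalue A k"
  shows "\<bar>k\<bar> \<le> r"
proof -
  obtain v where v: "v \<in> carrier_vec N" "v \<noteq> 0\<^sub>v N" "A *\<^sub>v v = k \<cdot>\<^sub>v v"
    using k A unfolding eigenvalue_def eigenvector_def by auto
  \<comment> \<open>Compare v with w at an index where the ratio of v to w is largest in absolute value.\<close>
  define f where "f j = \<bar>v $ j\<bar> / w $ j" for j
  have "N > 0"
  proof (rule ccontr)
    assume "\<not> N > 0"
    then have "v = 0\<^sub>v N"
      using v(1) by (intro eq_vecI) auto
    with v(2) show False ..
  qed
  obtain i where i: "i < N" and i_max: "\<And>j. j < N \<Longrightarrow> f j \<le> f i"
  proof -
    have "Max (f ` {..<N}) \<in> f ` {..<N}"
      using \<open>N > 0\<close> by (intro Max_in) auto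
    then obtain i where "i < N" "f i = Max (f ` {..<N})"
      by auto
    moreover have "f j \<le> Max (f ` {..<N})" if "j < N" for j
      using that by simp
    ultimately show ?thesis
      using that by auto
  qed
  have v_bound: "\<bar>v $ j\<bar> \<le> f i * w $ j" if "j < N" for j
    using i_max[OF that] w_pos[OF that] by (simp add: f_def field_simps)
  have "v $ i \<noteq> 0"
  proof
    assume "v $ i = 0"
    then have "v $ j = 0" if "j < N" for j
      using v_bound[OF that] by (simp add: f_def)
    then have "v = 0\<^sub>v N"
      using v(1) by (intro eq_vecI) auto
    with v(2) show False ..
  qed
  have row: "(A *\<^sub>v u) $ i = (\<Sum>j<N. A $$ (i, j) * u $ j)" if "u \<in> carrier_vec N" for u
    using A that i by (simp add: scalar_prod_def lessThan_atLeast0)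
  have "\<bar>k\<bar> * \<bar>v $ i\<bar> = \<bar>\<Sum>j<N. A $$ (i, j) * v $ j\<bar>"
    using v(1,3) i row[OF v(1)] by (simp add: abs_mult[symmetric])
  also have "\<dots> \<le> (\<Sum>j<N. A $$ (i, j) * (f i * w $ j))"
    by (rule order_trans[OF sum_abs sum_mono])
      (use nonneg i v_bound in \<open>auto simp: abs_mult intro: mult_left_mono\<close>)
  also have "\<dots> = f i * (A *\<^sub>v w) $ i"
    by (simp add: row[OF w] sum_distrib_left ac_simps)
  also have "\<dots> = r * \<bar>v $ i\<bar>"
    using w w_eigen i w_pos[OF i] by (simp add: f_def)
  finally show ?thesis
    using \<open>v $ i \<noteq> 0\<close> by simp
qed

lemma Max_eigenvalue_eq_of_positive_eigenvector:
  fixes A :: "real mat"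
  assumes A: "A \<in> carrier_mat N N" and "N > 0"
    and nonneg: "\<And>i j. i < N \<Longrightarrow> j < N \<Longrightarrow> A $$ (i, j) \<ge> 0"
    and w: "w \<in> carrier_vec N" and w_pos: "\<And>i. i < N \<Longrightarrow> w $ i > 0"
    and w_eigen: "A *\<^sub>v w = r \<cdot>\<^sub>v w"
  shows "Max {k. eigenvalue A k} = r"
proof (rule Max_eqI)
  have "char_poly A \<noteq> 0"
    using degree_monic_char_poly[OF A] by auto
  then show "finite {k. eigenvalue A k}"
    using poly_roots_finite eigenvalue_root_char_poly[OF A] by simp
  have "w \<noteq> 0\<^sub>v N"
  proof
    assume "w = 0\<^sub>v N"
    then have "w $ 0 = 0"
      using \<open>N > 0\<close> by simp
    with w_pos[OF \<open>N > 0\<close>] show False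
      by simp
  qed
  with A w w_eigen have "eigenvector A w r"
    unfolding eigenvector_def by simp
  then show "r \<in> {k. eigenvalue A k}"
    unfolding eigenvalue_def by blast
  show "k \<le> r" if "k \<in> {k. eigenvalue A k}" for k
  proof -
    from that have "eigenvalue A k"
      by simp
    with abs_eigenvalue_le_of_positive_eigenvector[OF A nonneg w w_pos w_eigen] show ?thesis
      by fastforce
  qed
qed

lemma signless_laplacian_carrier_mat:
  "signless_laplacian G \<in> carrier_mat (nverts G) (nverts G)"
  by (simp add: signless_laplacian_def adjacency_mat_def degree_mat_def)

lemma index_signless_laplacian:
  assumes "i < nverts G" "j < nverts G"
  shows "signless_laplacian G $$ (i, j) =
           (if adj G i j then 1 else 0) + (if i = j then real (degree G i) else 0)"
  using assms by (simp add: signless_laplacian_def adjacency_mat_def degree_mat_def)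

lemma signless_laplacian_nonneg:
  "i < nverts G \<Longrightarrow> j < nverts G \<Longrightarrow> signless_laplacian G $$ (i, j) \<ge> 0"
  by (simp add: index_signless_laplacian)

lemma index_signless_laplacian_mult_vec:
  assumes w: "w \<in> carrier_vec (nverts G)" and i: "i < nverts G"
  shows "(signless_laplacian G *\<^sub>v w) $ i =
           (\<Sum>j | j < nverts G \<and> adj G i j. w $ j) + real (degree G i) * w $ i"
proof -
  have "(signless_laplacian G *\<^sub>v w) $ i =
          (\<Sum>j<nverts G. signless_laplacian G $$ (i, j) * w $ j)"
    using signless_laplacian_carrier_mat[of G] w i by (simp add: scalar_prod_def lessThan_atLeast0)
  also have "\<dots> = (\<Sum>j<nverts G. (if adj G i j then w $ j else 0)
                  + (if i = j then real (degree G i) * w $ j else 0))"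
    using i by (intro sum.cong) (simp_all add: index_signless_laplacian distrib_right)
  also have "\<dots> = (\<Sum>j | j < nverts G \<and> adj G i j. w $ j) + real (degree G i) * w $ i"
    using i by (simp add: sum.distrib sum.inter_filter[symmetric])
  finally show ?thesis .
qed

abbreviation clique_join_graph :: "nat \<Rightarrow> nat \<Rightarrow> nat \<Rightarrow> sgraph" where
  "clique_join_graph s m z \<equiv>
     join_graph (complete_graph s) (disj_union (complete_graph m) (empty_graph z))"

lemma nverts_clique_join_graph: "nverts (clique_join_graph s m z) = s + m + z"
  by (simp add: join_graph_def disj_union_def complete_graph_def empty_graph_def nverts_def)

lemma adj_clique_join_graph:
  "adj (clique_join_graph s m z) i j \<longleftrightarrow>
     i < s + m + z \<and> j < s + m + z \<and> i \<noteq> j \<and> (i < s \<or> j < s \<or> i < s + m \<and> j < s + m)"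
  by (auto simp: join_graph_def disj_union_def complete_graph_def empty_graph_def nverts_def adj_def)

definition three_block_vec :: "nat \<Rightarrow> nat \<Rightarrow> nat \<Rightarrow> real \<Rightarrow> real \<Rightarrow> real vec" where
  "three_block_vec s m z b c = vec (s + m + z) (\<lambda>j. if j < s then 1 else if j < s + m then b else c)"

lemma sum_three_block_vec:
  fixes s m z :: nat and b c :: real
  defines "w \<equiv> three_block_vec s m z b c"
  shows "(\<Sum>j\<in>{0..<s}. w $ j) = real s"
    and "(\<Sum>j\<in>{0..<s + m}. w $ j) = real s + real m * b"
    and "(\<Sum>j\<in>{0..<s + m + z}. w $ j) = real s + real m * b + real z * c"
proof -
  show sum_clique: "(\<Sum>j\<in>{0..<s}. w $ j) = real s"
    by (simp add: w_def three_block_vec_def)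
  have "(\<Sum>j\<in>{0..<s + m}. w $ j) = (\<Sum>j\<in>{0..<s}. w $ j) + (\<Sum>j\<in>{s..<s + m}. w $ j)"
    by (rule sum.atLeastLessThan_concat[symmetric]) simp_all
  also have "(\<Sum>j\<in>{s..<s + m}. w $ j) = real m * b"
    by (simp add: w_def three_block_vec_def)
  finally show sum_cliques: "(\<Sum>j\<in>{0..<s + m}. w $ j) = real s + real m * b"
    using sum_clique by simp
  have "(\<Sum>j\<in>{0..<s + m + z}. w $ j)
      = (\<Sum>j\<in>{0..<s + m}. w $ j) + (\<Sum>j\<in>{s + m..<s + m + z}. w $ j)"
    by (rule sum.atLeastLessThan_concat[symmetric]) simp_all
  also have "(\<Sum>j\<in>{s + m..<s + m + z}. w $ j) = real z * c"
    by (simp add: w_def three_block_vec_def)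
  finally show "(\<Sum>j\<in>{0..<s + m + z}. w $ j) = real s + real m * b + real z * c"
    using sum_cliques by simp
qed

lemma clique_join_graph_eigenvector:
  fixes s m z :: nat and b c r :: real
  assumes "s \<ge> 1"
    and clique_row: "real (s + m + z) - 1 + (real s - 1) + real m * b + real z * c = r"
    and complete_row: "real s + (real s + 2 * real m - 2) * b = r * b"
    and isolated_row: "real s + real s * c = r * c"
  defines "w \<equiv> three_block_vec s m z b c"
  shows "signless_laplacian (clique_join_graph s m z) *\<^sub>v w = r \<cdot>\<^sub>v w"
proof (rule eq_vecI)
  let ?G = "clique_join_graph s m z" and ?Q = "signless_laplacian (clique_join_graph s m z)"
  define N where "N = s + m + z"
  have w: "w \<in> carrier_vec N"
    by (simp add: w_def three_block_vec_def N_def)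
  show "dim_vec (?Q *\<^sub>v w) = dim_vec (r \<cdot>\<^sub>v w)"
    using signless_laplacian_carrier_mat[of ?G] w by (simp add: nverts_clique_join_graph N_def)
  fix i assume "i < dim_vec (r \<cdot>\<^sub>v w)"
  then have i: "i < N" using w by simp
  have row: "(?Q *\<^sub>v w) $ i = (\<Sum>j\<in>X. w $ j) + real (card X) * w $ i"
    if "{j. j < N \<and> adj ?G i j} = X" for X
    using index_signless_laplacian_mult_vec[of w ?G i] that w i
    by (simp add: nverts_clique_join_graph N_def degree_def)
  consider "i < s" | "s \<le> i" "i < s + m" | "s + m \<le> i" by linarith
  then show "(?Q *\<^sub>v w) $ i = (r \<cdot>\<^sub>v w) $ i"
  proof cases
    case 1
    then have "{j. j < N \<and> adj ?G i j} = {0..<N} - {i}" and "w $ i = 1"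
      using i by (auto simp: adj_clique_join_graph N_def w_def three_block_vec_def)
    with row have "(?Q *\<^sub>v w) $ i = (\<Sum>j\<in>{0..<N}. w $ j) - 1 + real (N - 1)"
      using i by (simp add: sum_diff1)
    also have "\<dots> = r"
      using sum_three_block_vec(3)[of s m z b c] clique_row i by (simp add: of_nat_diff N_def w_def)
    finally show ?thesis
      using i w \<open>w $ i = 1\<close> by simp
  next
    case 2
    then have "{j. j < N \<and> adj ?G i j} = {0..<s + m} - {i}" and "w $ i = b"
      using i by (auto simp: adj_clique_join_graph N_def w_def three_block_vec_def)
    with row have "(?Q *\<^sub>v w) $ i = (\<Sum>j\<in>{0..<s + m}. w $ j) - b + real (s + m - 1) * b"
      using 2 by (simp add: sum_diff1)
    also have "\<dots> = r * b"
      using sum_three_block_vec(2)[of s m z b c] complete_row \<open>s \<ge> 1\<close>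
      by (simp add: of_nat_diff algebra_simps w_def)
    finally show ?thesis
      using i w \<open>w $ i = b\<close> by simp
  next
    case 3
    then have "{j. j < N \<and> adj ?G i j} = {0..<s}" and "w $ i = c"
      using i by (auto simp: adj_clique_join_graph N_def w_def three_block_vec_def)
    with row have "(?Q *\<^sub>v w) $ i = real s + real s * c"
      using sum_three_block_vec(1)[of s m z b c] by (simp add: w_def)
    then show ?thesis
      using i w \<open>w $ i = c\<close> isolated_row by simp
  qed
qed

lemma rhoQ_clique_join_graph_eq:
  fixes b c r :: real
  assumes "s \<ge> 1" and "b > 0" and "c > 0"
    and "real (s + m + z) - 1 + (real s - 1) + real m * b + real z * c = r"
    and "real s + (real s + 2 * real m - 2) * b = r * b"
    and "real s + real s * c = r * c"
  shows "rhoQ (clique_join_graph s m z) = r"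
proof -
  let ?G = "clique_join_graph s m z"
  define N where "N = s + m + z"
  define w where "w = three_block_vec s m z b c"
  have "signless_laplacian ?G \<in> carrier_mat N N"
    using signless_laplacian_carrier_mat[of ?G] by (simp add: nverts_clique_join_graph N_def)
  moreover have "signless_laplacian ?G $$ (i, j) \<ge> 0" if "i < N" "j < N" for i j
    using signless_laplacian_nonneg[of i ?G j] that by (simp add: nverts_clique_join_graph N_def)
  moreover have "w \<in> carrier_vec N"
    by (simp add: w_def three_block_vec_def N_def)
  moreover have "w $ j > 0" if "j < N" for j
    using that assms(1-3) by (simp add: w_def three_block_vec_def N_def)
  moreover have "signless_laplacian ?G *\<^sub>v w = r \<cdot>\<^sub>v w"
    unfolding w_def using assms(1,4-6) by (rule clique_join_graph_eigenvector)
  ultimately have "Max {k. eigenvalue (signless_laplacian ?G) k} = r"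
    using Max_eigenvalue_eq_of_positive_eigenvector[of "signless_laplacian ?G" N w r] \<open>s \<ge> 1\<close>
    by (simp add: N_def)
  then show ?thesis
    by (simp add: rhoQ_def)
qed

text \<open>The polynomial det (x I - B) of the quotient matrix
  B = [[n+s-2, n-2s+1, s-1], [s, 2n-3s, 0], [s, 0, s]] of the partition of
  K_s \<or> (K_(n-2s+1) \<union> (s-1) K_1) into its three parts.\<close>

definition quotient_char_poly :: "real \<Rightarrow> real \<Rightarrow> real \<Rightarrow> real" where
  "quotient_char_poly n s x =
     (x - (n + s - 2)) * (x - (2 * n - 3 * s)) * (x - s)
       - (n - 2 * s + 1) * s * (x - s) - (s - 1) * s * (x - (2 * n - 3 * s))"

lemma continuous_on_quotient_char_poly: "continuous_on A (quotient_char_poly n s)"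
  unfolding quotient_char_poly_def by (intro continuous_intros)

lemma rhoQ_clique_join_graph_eq_root:
  fixes n s :: nat and r :: real
  assumes "s \<ge> 2" and "2 * s \<le> n"
    and root: "quotient_char_poly n s r = 0" and "r > 2 * real n - 2 * real s"
  shows "rhoQ (clique_join_graph s (n - 2 * s + 1) (s - 1)) = r"
proof -
  define D1 where "D1 = r - (2 * real n - 3 * real s)"
  define D2 where "D2 = r - real s"
  have "D1 > 0" "D2 > 0"
    using assms by (simp_all add: D1_def D2_def)
  have m: "real (n - 2 * s + 1) = real n - 2 * real s + 1" and z: "real (s - 1) = real s - 1"
    using assms by (simp_all add: of_nat_diff)
  show ?thesis
  proof (rule rhoQ_clique_join_graph_eq[where b = "real s / D1" and c = "real s / D2"])
    show "s \<ge> 1" "real s / D1 > 0" "real s / D2 > 0"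
      using assms \<open>D1 > 0\<close> \<open>D2 > 0\<close> by simp_all
    have complete_degree: "real s + 2 * real (n - 2 * s + 1) - 2 = r - D1"
      using m by (simp add: D1_def)
    show "real s + (real s + 2 * real (n - 2 * s + 1) - 2) * (real s / D1) = r * (real s / D1)"
      unfolding complete_degree using \<open>D1 > 0\<close> by (simp add: field_simps)
    have r_eq: "r = D2 + real s"
      by (simp add: D2_def)
    show "real s + real s * (real s / D2) = r * (real s / D2)"
      unfolding r_eq using \<open>D2 > 0\<close> by (simp add: field_simps)
    have "(r - (real n + real s - 2)) * D1 * D2 - real (n - 2 * s + 1) * real s * D2
            - real (s - 1) * real s * D1 = quotient_char_poly n s r"
      unfolding m z by (simp add: quotient_char_poly_def D1_def D2_def algebra_simps)
    with root have "(r - (real n + real s - 2)) * D1 * D2 - real (n - 2 * s + 1) * real s * D2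
            - real (s - 1) * real s * D1 = 0"
      by simp
    then have "real n - 1 + (real s - 1) + real (n - 2 * s + 1) * (real s / D1)
                 + real (s - 1) * (real s / D2) = r"
      using \<open>D1 > 0\<close> \<open>D2 > 0\<close> by (simp add: field_simps)
    moreover have "real (s + (n - 2 * s + 1) + (s - 1)) = real n"
      using assms by simp
    ultimately show "real (s + (n - 2 * s + 1) + (s - 1)) - 1 + (real s - 1)
        + real (n - 2 * s + 1) * (real s / D1) + real (s - 1) * (real s / D2) = r"
      by simp
  qed
qed

lemma quotient_char_poly_at_2n_minus_2s:
  "quotient_char_poly n s (2 * n - 2 * s) = - 2 * s * (s - 1) * (n - s)"
  by (simp add: quotient_char_poly_def algebra_simps)

lemma quotient_char_poly_at_3n_minus_2s_pos:
  assumes "s \<ge> 1" and "2 * s \<le> n"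
  shows "quotient_char_poly n s (3 * n - 2 * s) > 0"
proof -
  have "quotient_char_poly n s (3 * n - 2 * s)
      = 6 * n\<^sup>2 * (n - 2 * s) + 2 * n * (3 * n - s) + 2 * n * s\<^sup>2 + 2 * s\<^sup>2 * (s - 1)"
    by (simp add: quotient_char_poly_def algebra_simps power2_eq_square)
  moreover have "2 * n * (3 * n - s) > 0"
    using assms by simp
  moreover have "6 * n\<^sup>2 * (n - 2 * s) \<ge> 0" "2 * n * s\<^sup>2 \<ge> 0" "2 * s\<^sup>2 * (s - 1) \<ge> 0"
    using assms by simp_all
  ultimately show ?thesis
    by linarith
qed

lemma quotient_char_poly_diff:
  "quotient_char_poly n s (2 * n - 2 * d + t) - quotient_char_poly n d (2 * n - 2 * d + t) =
     (s - d) * (t\<^sup>2 + (5 * n - 4 * s - 8 * d + 4) * t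
       + (4 * n\<^sup>2 - 4 * n * s - 14 * n * d + 10 * n - 2 * s\<^sup>2 + 6 * s * d - 2 * s + 10 * d\<^sup>2 - 10 * d))"
  by (simp add: quotient_char_poly_def algebra_simps power2_eq_square)

lemma concave_quadratic_pos_between:
  fixes \<alpha> \<beta> \<gamma> a b x :: real
  assumes "\<alpha> \<le> 0" and "a \<le> x" "x \<le> b"
    and "\<alpha> * a\<^sup>2 + \<beta> * a + \<gamma> > 0" and "\<alpha> * b\<^sup>2 + \<beta> * b + \<gamma> > 0"
  shows "\<alpha> * x\<^sup>2 + \<beta> * x + \<gamma> > 0"
proof (cases "a = b")
  case True
  with assms show ?thesis by simp
next
  case False
  define q where "q y = \<alpha> * y\<^sup>2 + \<beta> * y + \<gamma>" for y
  have "(b - a) * q x = (b - x) * q a + (x - a) * q b - \<alpha> * (x - a) * (b - x) * (b - a)"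
    by (simp add: q_def algebra_simps power2_eq_square)
  also have "\<dots> > 0"
  proof -
    have "(b - x) * q a + (x - a) * q b > 0"
      using assms False unfolding q_def
      by (smt (verit) mult_nonneg_nonneg mult_pos_pos)
    moreover have "(x - a) * (b - x) * (b - a) \<ge> 0"
      using assms by simp
    then have "\<alpha> * (x - a) * (b - x) * (b - a) \<le> 0"
      using mult_nonpos_nonneg[OF assms(1)] by (simp add: mult.assoc)
    ultimately show ?thesis by linarith
  qed
  finally show ?thesis
    using assms False by (simp add: q_def zero_less_mult_iff)
qed

lemma quotient_char_poly_diff_constant_pos:
  fixes n d s :: real
  assumes "d \<ge> 2" and "n \<ge> 7 * d - 7" and "d + 1 \<le> s" and "2 * s \<le> n"
  shows "4 * n\<^sup>2 - 4 * n * s - 14 * n * d + 10 * n - 2 * s\<^sup>2 + 6 * s * d - 2 * s + 10 * d\<^sup>2 - 10 * d > 0"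
proof -
  define \<beta> where "\<beta> = 6 * d - 4 * n - 2"
  define \<gamma> where "\<gamma> = 4 * n\<^sup>2 - 14 * n * d + 10 * n + 10 * d\<^sup>2 - 10 * d"
  \<comment> \<open>The quadratic in s is concave; substituting d = e + 2 and n = 7 d - 7 + k turns its
    values at s = d + 1 and s = n / 2 into polynomials in e, k \<ge> 0 with positive coefficients.\<close>
  define e where "e = d - 2"
  define k where "k = n - (7 * d - 7)"
  have "e \<ge> 0" "k \<ge> 0"
    using assms by (simp_all add: e_def k_def)
  then have squares: "k * e \<ge> 0" "k\<^sup>2 \<ge> 0" "e\<^sup>2 \<ge> 0"
    by simp_all
  have d: "d = e + 2" and n: "n = 7 * e + 7 + k"
    by (simp_all add: e_def k_def)
  have "-2 * (d + 1)\<^sup>2 + \<beta> * (d + 1) + \<gamma> = 4 * k\<^sup>2 + 38 * k * e + 26 * k + 84 * e\<^sup>2 + 102 * e + 18"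
    unfolding \<beta>_def \<gamma>_def d n by (simp add: algebra_simps power2_eq_square)
  also have "\<dots> > 0"
    using \<open>e \<ge> 0\<close> \<open>k \<ge> 0\<close> squares by linarith
  finally have at_left: "-2 * (d + 1)\<^sup>2 + \<beta> * (d + 1) + \<gamma> > 0" .
  have "-2 * (n / 2)\<^sup>2 + \<beta> * (n / 2) + \<gamma> = 3/2 * k\<^sup>2 + 10 * k * e + 8 * k + 13/2 * e\<^sup>2 + 9 * e + 5/2"
    unfolding \<beta>_def \<gamma>_def d n by (simp add: field_simps power2_eq_square)
  also have "\<dots> > 0"
    using \<open>e \<ge> 0\<close> \<open>k \<ge> 0\<close> squares by linarith
  finally have at_right: "-2 * (n / 2)\<^sup>2 + \<beta> * (n / 2) + \<gamma> > 0" .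
  have "-2 * s\<^sup>2 + \<beta> * s + \<gamma> > 0"
    by (rule concave_quadratic_pos_between[OF _ _ _ at_left at_right]) (use assms in auto)
  then show ?thesis
    by (simp add: \<beta>_def \<gamma>_def algebra_simps power2_eq_square)
qed

lemma quotient_char_poly_less:
  fixes n d s x :: real
  assumes "d \<ge> 2" and "n \<ge> 7 * d - 7" and "d + 1 \<le> s" and "2 * s \<le> n"
    and "x > 2 * n - 2 * d"
  shows "quotient_char_poly n d x < quotient_char_poly n s x"
proof -
  define t where "t = x - (2 * n - 2 * d)"
  have "t > 0" "x = 2 * n - 2 * d + t"
    using assms by (simp_all add: t_def)
  have "(5 * n - 4 * s - 8 * d + 4) * t \<ge> 0"
    using assms \<open>t > 0\<close> by simp
  then have "t\<^sup>2 + (5 * n - 4 * s - 8 * d + 4) * t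
      + (4 * n\<^sup>2 - 4 * n * s - 14 * n * d + 10 * n - 2 * s\<^sup>2 + 6 * s * d - 2 * s + 10 * d\<^sup>2 - 10 * d) > 0"
    using quotient_char_poly_diff_constant_pos[OF assms(1-4)] by (simp add: add_nonneg_pos)
  then have "quotient_char_poly n s x - quotient_char_poly n d x > 0"
    unfolding \<open>x = 2 * n - 2 * d + t\<close> quotient_char_poly_diff using assms by simp
  then show ?thesis
    by simp
qed

lemma rhoQ_clique_join_graph_between:
  fixes n s :: nat and y :: real
  assumes "s \<ge> 2" and "2 * s \<le> n"
    and "2 * real n - 2 * real s \<le> y" and "quotient_char_poly n s y > 0"
  shows "2 * real n - 2 * real s < rhoQ (clique_join_graph s (n - 2 * s + 1) (s - 1))"
    and "rhoQ (clique_join_graph s (n - 2 * s + 1) (s - 1)) < y"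
    and "quotient_char_poly n s (rhoQ (clique_join_graph s (n - 2 * s + 1) (s - 1))) = 0"
proof -
  have "quotient_char_poly n s (2 * real n - 2 * real s) < 0"
    using assms by (simp add: quotient_char_poly_at_2n_minus_2s mult_pos_pos)
  then obtain r where "2 * real n - 2 * real s \<le> r" "r \<le> y" and root: "quotient_char_poly n s r = 0"
    using IVT'[OF less_imp_le less_imp_le[OF assms(4)] assms(3) continuous_on_quotient_char_poly]
    by blast
  moreover have "r \<noteq> 2 * real n - 2 * real s" "r \<noteq> y"
    using root assms(4) \<open>quotient_char_poly n s (2 * real n - 2 * real s) < 0\<close> by auto
  ultimately have "2 * real n - 2 * real s < r" "r < y"
    by auto
  moreover have "rhoQ (clique_join_graph s (n - 2 * s + 1) (s - 1)) = r"
    using rhoQ_clique_join_graph_eq_root[OF assms(1,2) root] \<open>2 * real n - 2 * real s < r\<close> .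
  ultimately show "2 * real n - 2 * real s < rhoQ (clique_join_graph s (n - 2 * s + 1) (s - 1))"
    and "rhoQ (clique_join_graph s (n - 2 * s + 1) (s - 1)) < y"
    and "quotient_char_poly n s (rhoQ (clique_join_graph s (n - 2 * s + 1) (s - 1))) = 0"
    using root by simp_all
qed

theorem mainTheorem5:
  fixes \<delta> n s :: nat
  assumes "\<delta> \<ge> 2" and "n \<ge> 7 * \<delta> - 7"
    and "\<delta> + 1 \<le> s" and "2 * s \<le> n"
  shows "rhoQ (join_graph (complete_graph s)
                 (disj_union (complete_graph (n - 2 * s + 1)) (empty_graph (s - 1))))
       < rhoQ (join_graph (complete_graph \<delta>)
                 (disj_union (complete_graph (n - 2 * \<delta> + 1)) (empty_graph (\<delta> - 1))))"
proof -
  let ?\<rho> = "\<lambda>k. rhoQ (clique_join_graph k (n - 2 * k + 1) (k - 1))"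
  have "quotient_char_poly n \<delta> (3 * real n - 2 * real \<delta>) > 0"
    using assms by (intro quotient_char_poly_at_3n_minus_2s_pos) auto
  then have rho_\<delta>: "2 * real n - 2 * real \<delta> < ?\<rho> \<delta>" "quotient_char_poly n \<delta> (?\<rho> \<delta>) = 0"
    using rhoQ_clique_join_graph_between(1,3)[of \<delta> n "3 * real n - 2 * real \<delta>"] assms
    by simp_all
  moreover have "real n \<ge> 7 * real \<delta> - 7"
    using assms by (simp add: of_nat_diff)
  ultimately have "quotient_char_poly n s (?\<rho> \<delta>) > 0"
    using quotient_char_poly_less[of \<delta> n s "?\<rho> \<delta>"] assms by simp
  then show ?thesis
    using rhoQ_clique_join_graph_between(2)[of s n "?\<rho> \<delta>"] rho_\<delta>(1) assms by simp
qed
end
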